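(* Let $n\in\mathbb N$ and let $u$ be real-valued with $u\in C^\infty(\mathbb R)$, $\partial_x^ku\in L^\infty(\mathbb R)$ for $k=0,1,2$, $4u-u_{xx}>0$ on $\mathbb R$, satisfying $\mathrm{s\text{-}CH}_n(u)=0$, with associated polynomial $R_{2n+2}(z)=\prod_{m=0}^{2n+1}(z-E_m)$, $E_0<E_1<\cdots<E_{2n}<E_{2n+1}=0$. Then for all $x\in\mathbb R$, $$4u(x)-u_{xx}(x)=-\Big(\prod_{m=0}^{2n}E_m\Big)\Big(\prod_{j=1}^n\mu_j(x)^{-2}\Big)>0\quad\text{and}\quad 4u(x)+2u_x(x)>0.$$
   Context: Stationary CH formalism. Let $\mathcal G=(-d^2/dx^2+4)^{-1}$, i.e. $(\mathcal Gv)(x)=\frac14\int_{\mathbb R}e^{-2|x-y|}v(y)\,dy$ on $L^\infty(\mathbb R)$. Put $f_0=1$ and for $\ell\ge1$ define $f_\ell$ by $f_{\ell,x}=-2\mathcal G\big(2(4u-u_{xx})f_{\ell-1,x}+(4u_x-u_{xxx})f_{\ell-1}\big)$, $f_\ell$ being fixed up to an additive integration constant $c_\ell$. Set $g_\ell=f_\ell+\frac12f_{\ell,x}$, $h_\ell=(4u-u_{xx})f_\ell-g_{\ell+1,x}$ for $0\le\ell\le n-1$, $h_n=(4u-u_{xx})f_n$, and $F_n(z,x)=\sum_{\ell=0}^nf_{n-\ell}(x)z^\ell$, $G_n$, $H_n$ analogously with $g_\ell$, $h_\ell$. The $n$th stationary CH equation is $\mathrm{s\text{-}CH}_n(u):=(u_{xxx}-4u_x)f_n-2(4u-u_{xx})f_{n,x}=0$;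 when it holds, $R_{2n+2}(z):=z^2G_n(z,x)^2+zF_n(z,x)H_n(z,x)$ is independent of $x$, monic of degree $2n+2$, with $R_{2n+2}(0)=0$. The zeros of the monic polynomial $F_n(\cdot,x)$ are $\mu_1(x),\dots,\mu_n(x)$. *)

theory Defs
  imports "HOL-Analysis.Analysis"
begin

text \<open>Green's function operator G = (-d^2/dx^2 + 4)^(-1):
  (G v)(x) = 1/4 * integral over R of exp(-2|x-y|) v(y) dy (Lebesgue integral).\<close>
definition CH_G :: "(real \<Rightarrow> real) \<Rightarrow> real \<Rightarrow> real" where
  "CH_G v x = (1/4) * (LINT y|lborel. exp (-2 * \<bar>x - y\<bar>) * v y)"

abbreviation dk :: "nat \<Rightarrow> (real \<Rightarrow> real) \<Rightarrow> real \<Rightarrow> real" where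
  "dk k u \<equiv> (deriv ^^ k) u"

text \<open>The source term in the recursion f_{l,x} = -2 G(2(4u-u_xx) f_{l-1,x} + (4u_x-u_xxx) f_{l-1}).\<close>
definition CH_rhs :: "(real \<Rightarrow> real) \<Rightarrow> (real \<Rightarrow> real) \<Rightarrow> real \<Rightarrow> real" where
  "CH_rhs u fprev x = -2 * CH_G (\<lambda>y. 2 * (4 * u y - dk 2 u y) * deriv fprev y
                                   + (4 * dk 1 u y - dk 3 u y) * fprev y) x"

definition CH_g :: "(nat \<Rightarrow> real \<Rightarrow> real) \<Rightarrow> nat \<Rightarrow> real \<Rightarrow> real" where
  "CH_g f l x = f l x + 1/2 * deriv (f l) x"

definition CH_h :: "(real \<Rightarrow> real) \<Rightarrow> (nat \<Rightarrow> real \<Rightarrow> real) \<Rightarrow> nat \<Rightarrow> nat \<Rightarrow> real \<Rightarrow> real" where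
  "CH_h u f n l x = (if l < n then (4 * u x - dk 2 u x) * f l x - deriv (CH_g f (Suc l)) x
                     else (4 * u x - dk 2 u x) * f n x)"

definition CH_F :: "(nat \<Rightarrow> real \<Rightarrow> real) \<Rightarrow> nat \<Rightarrow> complex \<Rightarrow> real \<Rightarrow> complex" where
  "CH_F f n z x = (\<Sum>l\<le>n. complex_of_real (f (n - l) x) * z ^ l)"

definition CH_Gp :: "(nat \<Rightarrow> real \<Rightarrow> real) \<Rightarrow> nat \<Rightarrow> complex \<Rightarrow> real \<Rightarrow> complex" where
  "CH_Gp f n z x = (\<Sum>l\<le>n. complex_of_real (CH_g f (n - l) x) * z ^ l)"

definition CH_H :: "(real \<Rightarrow> real) \<Rightarrow> (nat \<Rightarrow> real \<Rightarrow> real) \<Rightarrow> nat \<Rightarrow> complex \<Rightarrow> real \<Rightarrow> complex" where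
  "CH_H u f n z x = (\<Sum>l\<le>n. complex_of_real (CH_h u f n (n - l) x) * z ^ l)"

definition sCH :: "(real \<Rightarrow> real) \<Rightarrow> (nat \<Rightarrow> real \<Rightarrow> real) \<Rightarrow> nat \<Rightarrow> real \<Rightarrow> real" where
  "sCH u f n x = (dk 3 u x - 4 * dk 1 u x) * f n x - 2 * (4 * u x - dk 2 u x) * deriv (f n) x"

end

theory Submission
  imports Defs
begin

text \<open>Because E(2n+1) = 0, dividing R(z) by z gives z G(z)^2 + F(z) H(z) = prod_{m <= 2n} (z - E m)
  for z \<noteq> 0, hence also at z = 0 by continuity. There F(0) = f_n = prod_j (- mu_j) and
  H(0) = (4u - u_xx) f_n, which is the trace formula. For the second inequality, w = 2u + u_x satisfies
  (w e^(-2x))' = (u_xx - 4u) e^(-2x) < 0; if w were nonpositive somewhere, then w <= -c e^(2x) for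
  large x, contradicting the boundedness of u and u_x. The recursion for f_l and s-CH_n(u) = 0 enter
  only through the identity for R(z), which is a hypothesis here.\<close>

lemma pos_if_bounded_and_exp_weighted_decreasing:
  fixes w :: "real \<Rightarrow> real" and a :: real
  assumes "a > 0" and "bounded (range w)"
    and dec: "\<And>x y. x < y \<Longrightarrow> w y * exp (- a * y) < w x * exp (- a * x)"
  shows "w x > 0"
proof (rule ccontr)
  assume "\<not> w x > 0"
  define c where "c = - w (x + 1) * exp (- a * (x + 1))"
  have "w x * exp (- a * x) \<le> 0"
    using \<open>\<not> w x > 0\<close> by (simp add: mult_nonpos_nonneg)
  then have "c > 0"
    using dec[of x "x + 1"] by (simp add: c_def)
  have upper: "w y \<le> - c * exp (a * y)" if "x + 1 \<le> y" for y
  proof -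
    have "w y * exp (- a * y) \<le> - c"
      using dec[of "x + 1" y] that by (cases "y = x + 1") (auto simp: c_def)
    then show ?thesis by (simp add: exp_minus field_simps)
  qed
  obtain B where B: "\<And>y. \<bar>w y\<bar> \<le> B"
    using \<open>bounded (range w)\<close> by (auto simp: bounded_iff)
  have "filterlim (\<lambda>y. c * exp (a * y)) at_top at_top"
    using \<open>c > 0\<close> \<open>a > 0\<close>
    by (intro filterlim_tendsto_pos_mult_at_top[OF tendsto_const] filterlim_compose[OF exp_at_top]
        filterlim_tendsto_pos_mult_at_top[OF tendsto_const _ filterlim_ident])
  then have "eventually (\<lambda>y. B + 1 \<le> c * exp (a * y) \<and> x + 1 \<le> y) at_top"
    by (auto simp: filterlim_at_top intro: eventually_conj eventually_ge_at_top)
  then obtain y where "B + 1 \<le> c * exp (a * y)" "x + 1 \<le> y"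
    by (metis (mono_tags, lifting) eventually_at_top_linorder order_refl)
  with upper[of y] B[of y] show False by linarith
qed

lemma isCont_eq_if_eq_punctured:
  fixes f g :: "'a::{t2_space,perfect_space} \<Rightarrow> 'b::t2_space"
  assumes "isCont f a" "isCont g a" "\<And>z. z \<noteq> a \<Longrightarrow> f z = g z"
  shows "f a = g a"
proof (rule LIM_unique)
  show "f \<midarrow>a\<rightarrow> f a" using assms(1) by (simp add: isCont_def)
  have "eventually (\<lambda>z. g z = f z) (at a)"
    using assms(3) by (auto simp: eventually_at_filter)
  then show "f \<midarrow>a\<rightarrow> g a"
    using assms(2) by (auto simp: isCont_def intro: Lim_transform_eventually)
qed

lemma two_u_plus_ux_pos:
  fixes u u' u'' :: "real \<Rightarrow> real"
  assumes u': "\<And>x. (u has_real_derivative u' x) (at x)"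
    and u'': "\<And>x. (u' has_real_derivative u'' x) (at x)"
    and "bounded (range u)" "bounded (range u')"
    and pos: "\<And>x. 4 * u x - u'' x > 0"
  shows "2 * u x + u' x > 0"
proof (rule pos_if_bounded_and_exp_weighted_decreasing[where a = 2 and w = "\<lambda>x. 2 * u x + u' x"])
  have "bounded (range (\<lambda>x. 2 *\<^sub>R u x + u' x))"
    using assms(3,4) by (intro bounded_plus_comp bounded_scaleR_comp)
  then show "bounded (range (\<lambda>x. 2 * u x + u' x))"
    by simp
  have "((\<lambda>x. (2 * u x + u' x) * exp (- 2 * x)) has_real_derivative
          (u'' x - 4 * u x) * exp (- 2 * x)) (at x)" for x
    by (auto intro!: derivative_eq_intros u' u'' simp: algebra_simps)
  moreover have "(u'' x - 4 * u x) * exp (- 2 * x) < 0" for x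
    using pos[of x] by (simp add: mult_neg_pos)
  ultimately show "(2 * u y + u' y) * exp (- 2 * y) < (2 * u x + u' x) * exp (- 2 * x)"
    if "x < y" for x y
    using DERIV_neg_imp_decreasing[OF that] by blast
qed simp

lemma lift_Suc_mono_less_upto:
  fixes E :: "nat \<Rightarrow> 'a::order"
  assumes "\<And>m. m < N \<Longrightarrow> E m < E (Suc m)"
  shows "m < N \<Longrightarrow> E m < E N"
  using assms
proof (induction N)
  case (Suc N)
  then show ?case by (metis less_Suc_eq order.strict_trans)
qed simp

lemma CH_F_at_zero: "CH_F f n 0 x = complex_of_real (f n x)"
  unfolding CH_F_def by (simp add: power_0_left if_distrib sum.If_cases)

lemma CH_H_at_zero: "CH_H u f n 0 x = complex_of_real ((4 * u x - dk 2 u x) * f n x)"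
  unfolding CH_H_def by (simp add: power_0_left if_distrib sum.If_cases CH_h_def)

lemma CH_trace_formula_at_zero:
  assumes R: "\<And>z. z\<^sup>2 * (CH_Gp f n z x)\<^sup>2 + z * CH_F f n z x * CH_H u f n z x
                  = (\<Prod>m\<le>2*n+1. z - complex_of_real (E m))"
    and "E (2*n+1) = 0"
  shows "(4 * u x - dk 2 u x) * (f n x)\<^sup>2 = - (\<Prod>m\<le>2*n. E m)"
proof -
  define A where "A z = z * (CH_Gp f n z x)\<^sup>2 + CH_F f n z x * CH_H u f n z x" for z
  define Q where "Q z = (\<Prod>m\<le>2*n. z - complex_of_real (E m))" for z
  have "isCont A 0"
    unfolding A_def CH_Gp_def CH_F_def CH_H_def by (intro continuous_intros)
  moreover have "isCont Q 0"
    unfolding Q_def by (intro continuous_intros)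
  moreover have "A z = Q z" if "z \<noteq> 0" for z
  proof -
    have "z * A z = (\<Prod>m\<le>2*n+1. z - complex_of_real (E m))"
      using R[of z] by (simp add: A_def power2_eq_square algebra_simps)
    also have "\<dots> = z * Q z"
      using \<open>E (2*n+1) = 0\<close> by (simp add: Q_def prod.atMost_Suc[of _ "2*n"] mult.commute)
    finally show ?thesis
      using that by simp
  qed
  ultimately have "A 0 = Q 0"
    by (rule isCont_eq_if_eq_punctured)
  moreover have "A 0 = complex_of_real ((4 * u x - dk 2 u x) * (f n x)\<^sup>2)"
    by (simp add: A_def CH_F_at_zero CH_H_at_zero power2_eq_square)
  moreover have "Q 0 = - complex_of_real (\<Prod>m\<le>2*n. E m)"
    by (simp add: Q_def prod_uminus)
  ultimately show ?thesis
    by (metis of_real_eq_iff of_real_minus)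
qed

lemma CH_trace_formula:
  fixes \<mu> :: "nat \<Rightarrow> complex"
  assumes R: "\<And>z. z\<^sup>2 * (CH_Gp f n z x)\<^sup>2 + z * CH_F f n z x * CH_H u f n z x
                  = (\<Prod>m\<le>2*n+1. z - complex_of_real (E m))"
    and "E (2*n+1) = 0" and "(\<Prod>m\<le>2*n. E m) \<noteq> 0"
    and mu: "\<And>z. CH_F f n z x = (\<Prod>j\<in>{1..n}. z - \<mu> j)"
  shows "complex_of_real (4 * u x - dk 2 u x)
           = - complex_of_real (\<Prod>m\<le>2*n. E m) * (\<Prod>j\<in>{1..n}. inverse ((\<mu> j)\<^sup>2))"
proof -
  have "complex_of_real (f n x) = (\<Prod>j\<in>{1..n}. - \<mu> j)"
    using mu[of 0] by (simp add: CH_F_at_zero)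
  then have "(complex_of_real (f n x))\<^sup>2 = (\<Prod>j\<in>{1..n}. (\<mu> j)\<^sup>2)"
    by (simp add: prod_power_distrib)
  moreover have "complex_of_real (4 * u x - dk 2 u x) * (complex_of_real (f n x))\<^sup>2
      = - complex_of_real (\<Prod>m\<le>2*n. E m)"
    using arg_cong[OF CH_trace_formula_at_zero[OF R \<open>E (2*n+1) = 0\<close>], of complex_of_real]
    by simp
  ultimately have key: "complex_of_real (4 * u x - dk 2 u x) * (\<Prod>j\<in>{1..n}. (\<mu> j)\<^sup>2)
      = - complex_of_real (\<Prod>m\<le>2*n. E m)"
    by simp
  with \<open>(\<Prod>m\<le>2*n. E m) \<noteq> 0\<close> have "(\<Prod>j\<in>{1..n}. (\<mu> j)\<^sup>2) \<noteq> 0"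
    by (metis mult_zero_right neg_equal_0_iff_equal of_real_eq_0_iff)
  moreover have "(\<Prod>j\<in>{1..n}. inverse ((\<mu> j)\<^sup>2)) = inverse (\<Prod>j\<in>{1..n}. (\<mu> j)\<^sup>2)"
    using prod_inversef[of "\<lambda>j. (\<mu> j)\<^sup>2" "{1..n}"] by (simp add: comp_def)
  ultimately show ?thesis
    by (metis key mult.assoc right_inverse mult_1_right)
qed

theorem mainTheorem4:
  fixes n :: nat and u :: "real \<Rightarrow> real" and f :: "nat \<Rightarrow> real \<Rightarrow> real"
    and E :: "nat \<Rightarrow> real" and \<mu> :: "nat \<Rightarrow> real \<Rightarrow> complex"
  assumes smooth: "\<And>k x. dk k u differentiable (at x)"
    and bdd: "\<And>k. k \<le> 2 \<Longrightarrow> bounded (range (dk k u))"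
    and pos: "\<And>x. 4 * u x - dk 2 u x > 0"
    and f0: "f 0 = (\<lambda>x. 1)"
    and frec: "\<And>l x. 1 \<le> l \<Longrightarrow> l \<le> n \<Longrightarrow> (f l has_real_derivative CH_rhs u (f (l - 1)) x) (at x)"
    and stat: "\<And>x. sCH u f n x = 0"
    and R: "\<And>z x. z\<^sup>2 * (CH_Gp f n z x)\<^sup>2 + z * CH_F f n z x * CH_H u f n z x
                  = (\<Prod>m\<le>2*n+1. z - complex_of_real (E m))"
    and Eord: "\<And>m. m < 2*n+1 \<Longrightarrow> E m < E (Suc m)"
    and Elast: "E (2*n+1) = 0"
    and mu: "\<And>z x. CH_F f n z x = (\<Prod>j\<in>{1..n}. z - \<mu> j x)"
  shows "\<forall>x. complex_of_real (4 * u x - dk 2 u x)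
              = - complex_of_real (\<Prod>m\<le>2*n. E m) * (\<Prod>j\<in>{1..n}. inverse ((\<mu> j x)\<^sup>2))
           \<and> 4 * u x - dk 2 u x > 0
           \<and> 4 * u x + 2 * dk 1 u x > 0"
proof (intro allI conjI)
  fix x
  show "4 * u x - dk 2 u x > 0"
    by (rule pos)
  have u': "(u has_real_derivative deriv u y) (at y)"
    and u'': "(deriv u has_real_derivative deriv (deriv u) y) (at y)" for y
    using smooth[of 0 y] smooth[of 1 y] by (simp_all add: DERIV_deriv_iff_real_differentiable)
  have "dk 2 u = deriv (deriv u)"
    by (simp add: numeral_2_eq_2)
  then have "2 * u x + deriv u x > 0"
    using two_u_plus_ux_pos[OF u' u''] bdd[of 0] bdd[of 1] pos by simp
  then show "4 * u x + 2 * dk 1 u x > 0"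
    by simp
  have "E m < 0" if "m \<le> 2*n" for m
    using lift_Suc_mono_less_upto[where N = "2*n+1" and E = E, OF Eord, of m] that Elast by simp
  then have "(\<Prod>m\<le>2*n. E m) \<noteq> 0"
    by (fastforce simp: prod_zero_iff)
  then show "complex_of_real (4 * u x - dk 2 u x)
      = - complex_of_real (\<Prod>m\<le>2*n. E m) * (\<Prod>j\<in>{1..n}. inverse ((\<mu> j x)\<^sup>2))"
    using CH_trace_formula[OF R Elast _ mu] by blast
qed

end
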